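(* Let $U$ and $V$ be real vector spaces and let $f:V^m\to\mathbb{R}\oplus U$ be an $m$-linear map. Assume there exist $x_1,\dots,x_m,y_1,\dots,y_m\in V$ such that $f(x_1,\dots,x_m)\in\mathbb{R}\setminus\{0\}$ and $f(y_1,\dots,y_m)\notin\mathbb{R}$. Then there exist an index $i\in\{1,\dots,m\}$ and vectors $r_1,\dots,r_m,r_i^*\in V$ such that \[ f(r_1,\dots,r_m)=1\quad\text{and}\quad f(r_1,\dots,r_{i-1},r_i^*,r_{i+1},\dots,r_m)\notin\mathbb{R}. \]
   Context: $\mathbb{R}$ is identified with the summand $\mathbb{R}\oplus 0\subseteq\mathbb{R}\oplus U$. *)

theory Defs
  imports "HOL-Analysis.Analysis"
begin

text \<open>An m-linear map V^m -> W, with V^m represented as lists of length m: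
  for every argument tuple and every position, the map in that position is linear.\<close>
definition multilinear :: "nat \<Rightarrow> ('v::real_vector list \<Rightarrow> 'w::real_vector) \<Rightarrow> bool" where
  "multilinear m f \<longleftrightarrow>
     (\<forall>xs i. length xs = m \<longrightarrow> i < m \<longrightarrow> linear (\<lambda>t. f (xs[i := t])))"

text \<open>R (+) U is real \<times> 'u; R is identified with the summand R \<times> {0}.\<close>
definition in_R :: "real \<times> 'u::real_vector \<Rightarrow> bool" where
  "in_R p \<longleftrightarrow> snd p = 0"

end

theory Submission
  imports Defs
begin

text \<open>
  Suppose no tuple \<open>r\<close> with \<open>f r = 1\<close> can be moved off \<open>\<real>\<close> by changing a single argument.
  Rescaling one argument turns every tuple with value in \<open>\<real> - {0}\<close> into one with value \<open>1\<close>,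
  so the values stay in \<open>\<real>\<close> whenever one argument of a tuple with value in \<open>\<real> - {0}\<close> is
  changed. An induction on the arity, replacing the first argument first, then shows that
  all values lie in \<open>\<real>\<close>: if the new first argument \<open>a\<close> kills the value, use \<open>a + x\<^sub>1\<close>
  instead and subtract.
\<close>

lemma multilinear_Cons:
  assumes "multilinear (Suc m) f"
  shows "multilinear m (\<lambda>ws. f (a # ws))"
  unfolding multilinear_def
proof (intro allI impI)
  fix xs :: "'a list" and i
  assume "length xs = m" "i < m"
  with assms have "linear (\<lambda>t. f ((a # xs)[Suc i := t]))"
    unfolding multilinear_def by (metis Suc_less_eq length_Cons)
  then show "linear (\<lambda>t. f (a # xs[i := t]))"
    by simp
qed

lemma multilinear_linear_hd:
  assumes "multilinear (Suc m) f" "length ws = m"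
  shows "linear (\<lambda>t. f (t # ws))"
proof -
  have "linear (\<lambda>t. f ((a # ws)[0 := t]))" for a
    using assms unfolding multilinear_def by (metis length_Cons zero_less_Suc)
  then show ?thesis by simp
qed

lemma multilinear_scale_nth:
  assumes "multilinear m f" "length xs = m" "i < m"
  shows "f (xs[i := c *\<^sub>R xs ! i]) = c *\<^sub>R f xs"
proof -
  have "linear (\<lambda>t. f (xs[i := t]))"
    using assms unfolding multilinear_def by blast
  from linear_scale[OF this] show ?thesis by simp
qed

lemma multilinear_values_in_subspace:
  assumes "multilinear m f" "subspace L"
    and "length xs = m" "f xs \<in> L" "f xs \<noteq> 0"
    and closed: "\<And>rs i t. length rs = m \<Longrightarrow> i < m \<Longrightarrow> f rs \<in> L \<Longrightarrow> f rs \<noteq> 0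
                   \<Longrightarrow> f (rs[i := t]) \<in> L"
    and "length ws = m"
  shows "f ws \<in> L"
  using assms
proof (induction m arbitrary: f xs ws)
  case 0
  then show ?case by simp
next
  case (Suc m)
  obtain x xs' where xs: "xs = x # xs'" and "length xs' = m"
    using Suc.prems(3) by (cases xs) auto
  obtain a ws' where ws: "ws = a # ws'" and "length ws' = m"
    using Suc.prems(7) by (cases ws) auto
  have tail: "f (b # ws') \<in> L" if "f (b # xs') \<in> L" "f (b # xs') \<noteq> 0" for b
  proof -
    have "(\<lambda>vs. f (b # vs)) ws' \<in> L"
    proof (rule Suc.IH[of "\<lambda>vs. f (b # vs)" xs'])
      fix rs i t
      assume "length rs = m" "i < m" "f (b # rs) \<in> L" "f (b # rs) \<noteq> 0"
      then have "f ((b # rs)[Suc i := t]) \<in> L"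
        using Suc.prems(6)[of "b # rs" "Suc i"] by simp
      then show "f (b # rs[i := t]) \<in> L" by simp
    qed (use Suc.prems(1,2) multilinear_Cons that \<open>length xs' = m\<close> \<open>length ws' = m\<close> in auto)
    then show ?thesis by simp
  qed
  have head: "f (c # xs') \<in> L" for c
    using Suc.prems(6)[of xs 0 c] Suc.prems(3-5) xs by simp
  have lin_xs': "linear (\<lambda>t. f (t # xs'))" and lin_ws': "linear (\<lambda>t. f (t # ws'))"
    using multilinear_linear_hd Suc.prems(1) \<open>length xs' = m\<close> \<open>length ws' = m\<close> by blast+
  show ?case
  proof (cases "f (a # xs') = 0")
    case False
    then show ?thesis using tail head ws by simp
  next
    case True
    then have "f ((a + x) # xs') = f (x # xs')"
      using linear_add[OF lin_xs'] by simp
    then have "f ((a + x) # ws') \<in> L"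
      using tail head Suc.prems(4,5) xs by simp
    moreover have "f (x # ws') \<in> L"
      using tail Suc.prems(4,5) xs by simp
    ultimately have "f ((a + x) # ws') - f (x # ws') \<in> L"
      using Suc.prems(2) by (simp add: subspace_diff)
    then show ?thesis
      using linear_add[OF lin_ws'] ws by simp
  qed
qed

lemma subspace_in_R: "subspace {p :: real \<times> 'u::real_vector. in_R p}"
  unfolding subspace_def in_R_def by simp

theorem mainTheorem11:
  fixes f :: "'v::real_vector list \<Rightarrow> real \<times> 'u::real_vector" and m :: nat
  assumes "multilinear m f"
    and "length xs = m" and "in_R (f xs)" and "f xs \<noteq> 0"
    and "length ys = m" and "\<not> in_R (f ys)"
  shows "\<exists>i rs r. i < m \<and> length rs = m \<and> f rs = (1, 0) \<and> \<not> in_R (f (rs[i := r]))"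
proof (rule ccontr)
  assume no_witness: "\<not> ?thesis"
  have "in_R (f (rs[i := t]))"
    if "length rs = m" "i < m" "in_R (f rs)" "f rs \<noteq> 0" for rs i t
  proof -
    define rs' where "rs' = rs[i := (1 / fst (f rs)) *\<^sub>R rs ! i]"
    have "f rs' = (1, 0)"
      using that multilinear_scale_nth[OF assms(1)] unfolding rs'_def in_R_def
      by (simp add: prod_eq_iff)
    moreover have "rs'[i := t] = rs[i := t]" "length rs' = m"
      using that unfolding rs'_def by simp_all
    ultimately show ?thesis using no_witness that by metis
  qed
  then have "in_R (f ys)"
    using multilinear_values_in_subspace[OF assms(1) subspace_in_R, of xs ys] assms(2-5)
    by simp
  with assms(6) show False ..
qed

end
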